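(* Let $F=(n_F)_{n\ge1}$ be a sequence in the family $\mathcal{T}_\lambda$. Let $n\in\mathbb{N}$, and let $(b_1,\dots,b_k)$ be any composition of $n$ into positive parts. Then the $F$-box $V_{n,n}=[1_F]\times[2_F]\times\cdots\times[n_F]$ can be partitioned into pairwise disjoint multi-blocks, each of the form $\sigma P_{b_1,\dots,b_k}$ for some permutation $\sigma$ (which may depend on the block).
   Context: Throughout, $\mathbb{N}=\{1,2,\dots\}$ and $[s_F]=\{1,\dots,s_F\}$. The family $\mathcal{T}_\lambda$ consists of sequences $F=(n_F)_{n\ge1}$ of natural numbers for which there exist functions $\lambda_K,\lambda_M:\mathbb{N}\times\mathbb{N}\to\mathbb{N}\cup\{0\}$ such that $(k+m)_F=\lambda_K(k,m)\,k_F+\lambda_M(k,m)\,m_F$ for all $k,m\in\mathbb{N}$. Multi-block: given a composition $(b_1,\dots,b_k)$ of $n$ (so $b_i\ge1$ and $b_1+\dots+b_k=n$), let $L^0=(1,2,\dots,b_1,1,2,\dots,b_2,\dots,1,2,\dots,b_k)$, a vector of length $n$. For a permutation $\sigma$ of $\{1,\dots,n\}$, let $L_s=L^0_{\sigma(s)}$. A multi-block of the form $\sigma P_{b_1,\dots,b_k}$ is a set $A_1\times\cdots\times A_n$ with $A_s\subseteq[s_F]$ and $|A_s|=(L_s)_F$ for $s=1,\dots,n$. In cobweb language, this is a sub-layer of $\langle\Phi_1\to\Phi_n\rangle$, and its points correspond to maximal paths. *)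

theory Defs
  imports "HOL-Combinatorics.Permutations"
begin

definition in_T_lambda :: "(nat \<Rightarrow> nat) \<Rightarrow> bool" where
  "in_T_lambda F \<longleftrightarrow> (\<forall>n\<ge>1. F n \<ge> 1) \<and>
     (\<exists>lK lM :: nat \<Rightarrow> nat \<Rightarrow> nat.
        \<forall>k\<ge>1. \<forall>m\<ge>1. F (k + m) = lK k m * F k + lM k m * F m)"

text \<open>Cartesian product A_1 x ... x A_n, tuples as lists; list position i carries coordinate s = i+1.\<close>
definition prod_sets :: "nat \<Rightarrow> (nat \<Rightarrow> nat set) \<Rightarrow> nat list set" where
  "prod_sets n A = {xs. length xs = n \<and> (\<forall>i<n. xs ! i \<in> A (Suc i))}"

definition F_box :: "(nat \<Rightarrow> nat) \<Rightarrow> nat \<Rightarrow> nat list set" where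
  "F_box F n = prod_sets n (\<lambda>s. {1..F s})"

text \<open>L^0 = (1,...,b_1,1,...,b_2,...,1,...,b_k), stored 0-indexed.\<close>
definition L0 :: "nat list \<Rightarrow> nat list" where
  "L0 bs = concat (map (\<lambda>b. [1..<Suc b]) bs)"

definition is_multiblock :: "(nat \<Rightarrow> nat) \<Rightarrow> nat list \<Rightarrow> (nat \<Rightarrow> nat) \<Rightarrow> nat list set \<Rightarrow> bool" where
  "is_multiblock F bs \<sigma> B \<longleftrightarrow> (let n = sum_list bs in
     \<sigma> permutes {1..n} \<and>
     (\<exists>A. (\<forall>s\<in>{1..n}. A s \<subseteq> {1..F s} \<and> card (A s) = F (L0 bs ! (\<sigma> s - 1)))
          \<and> B = prod_sets n A))"

end

theory Submission
  imports Defs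
begin

text \<open>Induct on the composition: the part b occupies the coordinates n+1, ..., n+b, so it
  suffices to tile a box with side lengths F(m+1), ..., F(m+k) by boxes whose side lengths are a
  rearrangement of F(1), ..., F(k).  The longest side F(m+k) = \<lambda>K F(k) + \<lambda>M F(m) is cut
  into segments of lengths F(k) and F(m).  Over a segment of length F(k) the coordinate is already
  final and the remaining coordinates carry indices m+1, ..., m+k-1; over a segment of length F(m)
  the indices become m, ..., m+k-1.  Either way m+k drops, and the induction stops when m = 0.\<close>

text \<open>Tiles are whole functions: two tiles that agree on S but not outside it count as distinct
  and break uniqueness.\<close>

definition tiling :: "'c set \<Rightarrow> ('c \<Rightarrow> 'a set) \<Rightarrow> ('c \<Rightarrow> 'a set) set \<Rightarrow> bool" where
  "tiling S R T \<longleftrightarrow> (\<forall>A\<in>T. \<forall>s\<in>S. A s \<subseteq> R s) \<and>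
     (\<forall>x. (\<forall>s\<in>S. x s \<in> R s) \<longrightarrow> (\<exists>!A. A \<in> T \<and> (\<forall>s\<in>S. x s \<in> A s)))"

text \<open>With g i = F (L0 bs ! (i - 1)) and I = S = {1..n}, this is the multi-block condition of the
  paper, \<tau> playing the role of \<sigma>.\<close>

definition has_shape :: "('i \<Rightarrow> nat) \<Rightarrow> 'i set \<Rightarrow> 'c set \<Rightarrow> ('c \<Rightarrow> 'a set) \<Rightarrow> bool" where
  "has_shape g I S A \<longleftrightarrow> (\<exists>\<tau>. bij_betw \<tau> S I \<and> (\<forall>s\<in>S. card (A s) = g (\<tau> s)))"

subsection \<open>Tilings of boxes\<close>

lemma tilingI:
  assumes "\<And>A s. A \<in> T \<Longrightarrow> s \<in> S \<Longrightarrow> A s \<subseteq> R s"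
    and "\<And>x. \<forall>s\<in>S. x s \<in> R s \<Longrightarrow> \<exists>A\<in>T. \<forall>s\<in>S. x s \<in> A s"
    and "\<And>x A A'. A \<in> T \<Longrightarrow> A' \<in> T \<Longrightarrow> \<forall>s\<in>S. x s \<in> A s \<Longrightarrow> \<forall>s\<in>S. x s \<in> A' s \<Longrightarrow> A = A'"
  shows "tiling S R T"
  unfolding tiling_def using assms(1) by (auto intro!: ex_ex1I dest: assms(2) intro: assms(3))

lemma tiling_subset: "tiling S R T \<Longrightarrow> A \<in> T \<Longrightarrow> s \<in> S \<Longrightarrow> A s \<subseteq> R s"
  unfolding tiling_def by blast

lemma tiling_cover: "tiling S R T \<Longrightarrow> \<forall>s\<in>S. x s \<in> R s \<Longrightarrow> \<exists>A\<in>T. \<forall>s\<in>S. x s \<in> A s"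
  unfolding tiling_def by blast

lemma tiling_unique:
  assumes "tiling S R T" "A \<in> T" "A' \<in> T" "\<forall>s\<in>S. x s \<in> A s" "\<forall>s\<in>S. x s \<in> A' s"
  shows "A = A'"
proof -
  have "\<forall>s\<in>S. x s \<in> R s" using assms(2,4) tiling_subset[OF assms(1)] by blast
  then have "\<exists>!A. A \<in> T \<and> (\<forall>s\<in>S. x s \<in> A s)" using assms(1) unfolding tiling_def by simp
  with assms(2-5) show ?thesis by (auto elim: ex1E)
qed

lemma tiling_single: "tiling S R {R}"
  by (rule tilingI) auto

lemma tiling_cong:
  assumes "tiling S R T" "\<And>s. s \<in> S \<Longrightarrow> R s = R' s"
  shows "tiling S R' T"
  using assms unfolding tiling_def by simp

lemma tiling_union:
  assumes s0: "s0 \<in> S" and disj: "pairwise disjnt CC" and cover: "\<Union>CC = R s0"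
    and T: "\<And>C. C \<in> CC \<Longrightarrow> tiling S (R(s0 := C)) (T C)"
  shows "tiling S R (\<Union>C\<in>CC. T C)"
proof (rule tilingI)
  fix A s assume "A \<in> (\<Union>C\<in>CC. T C)" and s: "s \<in> S"
  then obtain C where C: "C \<in> CC" "A \<in> T C" by blast
  have "A s \<subseteq> (R(s0 := C)) s" using tiling_subset[OF T[OF C(1)] C(2) s] .
  with C(1) cover show "A s \<subseteq> R s" by (cases "s = s0") auto
next
  fix x assume x: "\<forall>s\<in>S. x s \<in> R s"
  then obtain C where C: "C \<in> CC" "x s0 \<in> C" using s0 cover by blast
  with x have "\<forall>s\<in>S. x s \<in> (R(s0 := C)) s" by simp
  then obtain A where "A \<in> T C" "\<forall>s\<in>S. x s \<in> A s" using tiling_cover[OF T[OF C(1)]] by blast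
  with C(1) show "\<exists>A\<in>\<Union>C\<in>CC. T C. \<forall>s\<in>S. x s \<in> A s" by blast
next
  fix x A A' assume A: "A \<in> (\<Union>C\<in>CC. T C)" and A': "A' \<in> (\<Union>C\<in>CC. T C)"
    and x: "\<forall>s\<in>S. x s \<in> A s" "\<forall>s\<in>S. x s \<in> A' s"
  obtain C C' where C: "C \<in> CC" "A \<in> T C" and C': "C' \<in> CC" "A' \<in> T C'"
    using A A' by blast
  have "x s0 \<in> C" using tiling_subset[OF T[OF C(1)] C(2) s0] x(1) s0 by auto
  moreover have "x s0 \<in> C'" using tiling_subset[OF T[OF C'(1)] C'(2) s0] x(2) s0 by auto
  ultimately have "C = C'" using disj C(1) C'(1) by (metis disjnt_iff pairwiseD)
  with C'(2) have "A' \<in> T C" by simp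
  then show "A = A'" by (rule tiling_unique[OF T[OF C(1)] C(2) _ x])
qed

lemma tiling_extend:
  assumes T: "tiling S R T" and s0: "s0 \<notin> S"
  shows "tiling (insert s0 S) R ((\<lambda>A. A(s0 := R s0)) ` T)"
proof (rule tilingI)
  fix B s assume "B \<in> (\<lambda>A. A(s0 := R s0)) ` T" "s \<in> insert s0 S"
  then show "B s \<subseteq> R s" by (cases "s = s0") (auto intro: tiling_subset[OF T, THEN subsetD])
next
  fix x assume x: "\<forall>s\<in>insert s0 S. x s \<in> R s"
  then have "\<forall>s\<in>S. x s \<in> R s" by simp
  then obtain A where "A \<in> T" "\<forall>s\<in>S. x s \<in> A s" using tiling_cover[OF T] by blast
  with x s0 show "\<exists>B\<in>(\<lambda>A. A(s0 := R s0)) ` T. \<forall>s\<in>insert s0 S. x s \<in> B s"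
    by (intro bexI[of _ "A(s0 := R s0)"]) auto
next
  fix x B B' assume "B \<in> (\<lambda>A. A(s0 := R s0)) ` T" "B' \<in> (\<lambda>A. A(s0 := R s0)) ` T"
    and x: "\<forall>s\<in>insert s0 S. x s \<in> B s" "\<forall>s\<in>insert s0 S. x s \<in> B' s"
  then obtain A A' where A: "A \<in> T" "B = A(s0 := R s0)" and A': "A' \<in> T" "B' = A'(s0 := R s0)"
    by blast
  have "\<forall>s\<in>S. x s \<in> A s" "\<forall>s\<in>S. x s \<in> A' s" using x A(2) A'(2) s0 by (auto split: if_splits)
  then have "A = A'" by (rule tiling_unique[OF T A(1) A'(1)])
  with A(2) A'(2) show "B = B'" by simp
qed

lemma tiling_prod:
  assumes T1: "tiling S1 R T1" and T2: "tiling S2 R T2" and disj: "S1 \<inter> S2 = {}"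
  shows "tiling (S1 \<union> S2) R {override_on A2 A1 S1 | A1 A2. A1 \<in> T1 \<and> A2 \<in> T2}"
proof (rule tilingI)
  fix A s assume "A \<in> {override_on A2 A1 S1 | A1 A2. A1 \<in> T1 \<and> A2 \<in> T2}" "s \<in> S1 \<union> S2"
  then show "A s \<subseteq> R s"
    by (cases "s \<in> S1") (auto intro: tiling_subset[OF T1, THEN subsetD] tiling_subset[OF T2, THEN subsetD])
next
  fix x assume x: "\<forall>s\<in>S1 \<union> S2. x s \<in> R s"
  then obtain A1 A2 where "A1 \<in> T1" "\<forall>s\<in>S1. x s \<in> A1 s" "A2 \<in> T2" "\<forall>s\<in>S2. x s \<in> A2 s"
    using tiling_cover[OF T1, of x] tiling_cover[OF T2, of x] by auto
  then show "\<exists>A\<in>{override_on A2 A1 S1 | A1 A2. A1 \<in> T1 \<and> A2 \<in> T2}. \<forall>s\<in>S1 \<union> S2. x s \<in> A s"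
    by (intro bexI[of _ "override_on A2 A1 S1"]) (auto simp: override_on_def)
next
  fix x B B' assume "B \<in> {override_on A2 A1 S1 | A1 A2. A1 \<in> T1 \<and> A2 \<in> T2}"
    "B' \<in> {override_on A2 A1 S1 | A1 A2. A1 \<in> T1 \<and> A2 \<in> T2}"
    and x: "\<forall>s\<in>S1 \<union> S2. x s \<in> B s" "\<forall>s\<in>S1 \<union> S2. x s \<in> B' s"
  then obtain A1 A2 A1' A2' where A: "B = override_on A2 A1 S1" "A1 \<in> T1" "A2 \<in> T2"
    and A': "B' = override_on A2' A1' S1" "A1' \<in> T1" "A2' \<in> T2"
    by blast
  have out: "s \<notin> S1" if "s \<in> S2" for s using disj that by blast
  have "\<forall>s\<in>S1. x s \<in> A1 s" "\<forall>s\<in>S1. x s \<in> A1' s"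
    using x unfolding A(1) A'(1) by (metis UnI1 override_on_apply_in)+
  then have "A1 = A1'" by (rule tiling_unique[OF T1 A(2) A'(2)])
  moreover have "\<forall>s\<in>S2. x s \<in> A2 s" "\<forall>s\<in>S2. x s \<in> A2' s"
    using x unfolding A(1) A'(1) by (metis UnI2 out override_on_apply_notin)+
  then have "A2 = A2'" by (rule tiling_unique[OF T2 A(3) A'(3)])
  ultimately show "B = B'" using A(1) A'(1) by simp
qed

lemma partition_by_cards:
  assumes "finite X" "card X = sum_list cs"
  shows "\<exists>CC. pairwise disjnt CC \<and> \<Union>CC = X \<and> (\<forall>C\<in>CC. card C \<in> set cs)"
  using assms
proof (induction cs arbitrary: X)
  case Nil
  then show ?case by (intro exI[of _ "{}"]) auto
next
  case (Cons c cs)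
  then have "c \<le> card X" by simp
  then obtain Y where Y: "Y \<subseteq> X" "card Y = c" "finite Y" by (rule obtain_subset_with_card_n)
  then have "card (X - Y) = sum_list cs" using Cons.prems(2) by (simp add: card_Diff_subset)
  then obtain CC where CC: "pairwise disjnt CC" "\<Union>CC = X - Y" "\<forall>C\<in>CC. card C \<in> set cs"
    using Cons.IH[of "X - Y"] Cons.prems(1) by blast
  have "pairwise disjnt (insert Y CC)"
    using CC(1,2) unfolding pairwise_insert by (auto simp: disjnt_def)
  moreover have "\<Union>(insert Y CC) = X" using CC(2) Y(1) by blast
  ultimately show ?case using CC(3) Y(2) by (intro exI[of _ "insert Y CC"]) simp
qed

lemma tiling_split_coordinate:
  assumes "s0 \<in> S" "finite (R s0)" "card (R s0) = sum_list cs"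
    and "\<And>C. C \<subseteq> R s0 \<Longrightarrow> card C \<in> set cs \<Longrightarrow> \<exists>T. tiling S (R(s0 := C)) T \<and> (\<forall>A\<in>T. P A)"
  shows "\<exists>T. tiling S R T \<and> (\<forall>A\<in>T. P A)"
proof -
  obtain CC where CC: "pairwise disjnt CC" "\<Union>CC = R s0" "\<forall>C\<in>CC. card C \<in> set cs"
    using partition_by_cards[OF assms(2,3)] by blast
  have "\<forall>C\<in>CC. \<exists>T. tiling S (R(s0 := C)) T \<and> (\<forall>A\<in>T. P A)"
  proof
    fix C assume "C \<in> CC"
    then show "\<exists>T. tiling S (R(s0 := C)) T \<and> (\<forall>A\<in>T. P A)"
      using CC(2,3) by (intro assms(4)) auto
  qed
  then obtain T where T: "\<forall>C\<in>CC. tiling S (R(s0 := C)) (T C) \<and> (\<forall>A\<in>T C. P A)"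
    by (rule bchoice[THEN exE])
  then have "tiling S R (\<Union>C\<in>CC. T C)" by (intro tiling_union[where R = R, OF assms(1) CC(1,2)]) simp
  with T show ?thesis by (intro exI[of _ "\<Union>C\<in>CC. T C"]) simp
qed

subsection \<open>Shapes of boxes\<close>

lemma has_shape_insert:
  assumes "has_shape g I S A" "s0 \<notin> S" "i \<notin> I" "card C = g i"
  shows "has_shape g (insert i I) (insert s0 S) (A(s0 := C))"
proof -
  obtain \<tau> where \<tau>: "bij_betw \<tau> S I" "\<forall>s\<in>S. card (A s) = g (\<tau> s)"
    using assms(1) unfolding has_shape_def by blast
  have "bij_betw (\<tau>(s0 := i)) S I \<longleftrightarrow> bij_betw \<tau> S I"
    using assms(2) by (intro bij_betw_cong) auto
  with \<tau>(1) have "bij_betw (\<tau>(s0 := i)) (insert s0 S) (insert i I)"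
    using notIn_Un_bij_betw3[of s0 S "\<tau>(s0 := i)" I] assms(2,3) by simp
  with \<tau>(2) assms(2,4) show ?thesis unfolding has_shape_def by auto
qed

lemma has_shape_union:
  assumes "has_shape g I1 S1 A1" "has_shape g I2 S2 A2" "S1 \<inter> S2 = {}" "I1 \<inter> I2 = {}"
  shows "has_shape g (I1 \<union> I2) (S1 \<union> S2) (override_on A2 A1 S1)"
proof -
  obtain \<tau>1 \<tau>2 where "bij_betw \<tau>1 S1 I1" "\<forall>s\<in>S1. card (A1 s) = g (\<tau>1 s)"
    "bij_betw \<tau>2 S2 I2" "\<forall>s\<in>S2. card (A2 s) = g (\<tau>2 s)"
    using assms(1,2) unfolding has_shape_def by blast
  with assms(3,4) show ?thesis
    unfolding has_shape_def by (intro exI[of _ "\<lambda>s. if s \<in> S1 then \<tau>1 s else \<tau>2 s"]) (auto intro: bij_betw_disjoint_Un)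
qed

lemma has_shape_reindex:
  assumes "has_shape g I S A" "bij_betw h I J" "\<And>i. i \<in> I \<Longrightarrow> g' (h i) = g i"
  shows "has_shape g' J S A"
proof -
  obtain \<tau> where \<tau>: "bij_betw \<tau> S I" "\<forall>s\<in>S. card (A s) = g (\<tau> s)"
    using assms(1) unfolding has_shape_def by blast
  moreover have "\<forall>s\<in>S. g (\<tau> s) = g' (h (\<tau> s))"
    using assms(3) bij_betw_apply[OF \<tau>(1)] by auto
  ultimately show ?thesis
    unfolding has_shape_def using assms(2) by (intro exI[of _ "h \<circ> \<tau>"]) (auto intro: bij_betw_trans)
qed

lemma has_shape_remove:
  assumes "has_shape g I S A" "i \<in> I"
  obtains s0 where "s0 \<in> S" "card (A s0) = g i" "has_shape g (I - {i}) (S - {s0}) A"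
proof -
  obtain \<tau> where \<tau>: "bij_betw \<tau> S I" "\<forall>s\<in>S. card (A s) = g (\<tau> s)"
    using assms(1) unfolding has_shape_def by blast
  define s0 where "s0 = inv_into S \<tau> i"
  have s0: "s0 \<in> S" "\<tau> s0 = i"
    using \<tau>(1) assms(2) unfolding s0_def by (auto simp: bij_betw_def inv_into_into f_inv_into_f)
  then have "bij_betw \<tau> (S - {s0}) (I - {i})" using \<tau>(1) assms(2) by (intro bij_betw_DiffI) auto
  with \<tau>(2) have "has_shape g (I - {i}) (S - {s0}) A" unfolding has_shape_def by auto
  with s0 \<tau>(2) that show thesis by simp
qed

lemma tiling_insert_coordinate:
  assumes T: "tiling (S - {s0}) R T" and shapes: "\<forall>A\<in>T. has_shape g I (S - {s0}) A"
    and "s0 \<in> S" "i \<notin> I" "card (R s0) = g i"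
  shows "tiling S R ((\<lambda>A. A(s0 := R s0)) ` T) \<and>
    (\<forall>A\<in>(\<lambda>A. A(s0 := R s0)) ` T. has_shape g (insert i I) S A)"
  using tiling_extend[OF T, of s0] has_shape_insert[of g I "S - {s0}" _ s0 i "R s0"] shapes assms(3-5)
  by (auto simp: insert_absorb)

subsection \<open>Tiling F-boxes\<close>

lemma tiling_shape_shift:
  fixes F :: "nat \<Rightarrow> nat" and R :: "'c \<Rightarrow> 'a set"
  assumes F_add: "\<forall>k\<ge>1. \<forall>m\<ge>1. F (k + m) = lK k m * F k + lM k m * F m"
  shows "has_shape F {m+1..m+k} S R \<Longrightarrow> \<forall>s\<in>S. finite (R s) \<Longrightarrow>
    \<exists>T. tiling S R T \<and> (\<forall>A\<in>T. has_shape F {1..k} S A)"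
proof (induction "m + k" arbitrary: m k S R rule: less_induct)
  case less
  show ?case
  proof (cases "m = 0 \<or> k = 0")
    case True
    then have "{m+1..m+k} = {1..k}" by auto
    with less.prems(1) show ?thesis using tiling_single by (intro exI[of _ "{R}"]) auto
  next
    case False
    then obtain m' k' where mk: "m = Suc m'" "k = Suc k'" by (meson not0_implies_Suc)
    have "{m+1..m+k} - {m+k} = {m+1..m+k'}" using mk by auto
    then obtain s0 where s0: "s0 \<in> S" "card (R s0) = F (k + m)"
      and rest: "has_shape F {m+1..m+k'} (S - {s0}) R"
      using has_shape_remove[OF less.prems(1), of "m + k"] mk by (auto simp: add.commute)
    define cs where "cs = replicate (lK k m) (F k) @ replicate (lM k m) (F m)"
    have card_s0: "card (R s0) = sum_list cs"
      using F_add[rule_format, of k m] s0(2) mk by (simp add: cs_def sum_list_replicate)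
    show ?thesis
    proof (rule tiling_split_coordinate[of s0 S R cs])
      fix C assume C: "C \<subseteq> R s0" "card C \<in> set cs"
      then consider "card C = F k" | "card C = F m" by (auto simp: cs_def split: if_splits)
      then show "\<exists>T. tiling S (R(s0 := C)) T \<and> (\<forall>A\<in>T. has_shape F {1..k} S A)"
      proof cases
        case 1
        obtain T where T: "tiling (S - {s0}) R T" "\<forall>A\<in>T. has_shape F {1..k'} (S - {s0}) A"
          using less.hyps[of m k' "S - {s0}" R] rest less.prems(2) mk by auto
        have "tiling (S - {s0}) (R(s0 := C)) T" using T(1) by (rule tiling_cong) simp
        from tiling_insert_coordinate[OF this T(2) s0(1), of k] 1 mk show ?thesis
          by (auto simp: atLeastAtMostSuc_conv)
      next
        case 2
        have "has_shape F (insert m {m+1..m+k'}) S (R(s0 := C))"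
          using has_shape_insert[OF rest, of s0 m C] s0(1) 2 by (simp add: insert_absorb)
        moreover have "insert m {m+1..m+k'} = {m'+1..m'+k}" using mk by auto
        moreover have "\<forall>s\<in>S. finite ((R(s0 := C)) s)"
          using less.prems(2) C(1) s0(1) by (auto intro: finite_subset)
        ultimately show ?thesis using less.hyps[of m' k S "R(s0 := C)"] mk by auto
      qed
    qed (use s0(1) less.prems(2) card_s0 in auto)
  qed
qed

lemma length_L0: "length (L0 bs) = sum_list bs"
  by (induction bs) (simp_all add: L0_def)

lemma L0_snoc: "L0 (bs @ [b]) = L0 bs @ [1..<Suc b]"
  by (simp add: L0_def)

lemma tiling_L0_shape:
  fixes F :: "nat \<Rightarrow> nat"
  assumes F_add: "\<forall>k\<ge>1. \<forall>m\<ge>1. F (k + m) = lK k m * F k + lM k m * F m"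
  shows "\<exists>T. tiling {1..sum_list bs} (\<lambda>s. {1..F s}) T \<and>
    (\<forall>A\<in>T. has_shape (\<lambda>i. F (L0 bs ! (i - 1))) {1..sum_list bs} {1..sum_list bs} A)"
proof (induction bs rule: rev_induct)
  case Nil
  then show ?case
    using tiling_single by (intro exI[of _ "{\<lambda>s. {1..F s}}"]) (auto simp: has_shape_def)
next
  case (snoc b bs)
  define n where "n = sum_list bs"
  define G where "G = (\<lambda>i. F (L0 (bs @ [b]) ! (i - 1)))"
  have lenL0: "length (L0 bs) = n" unfolding n_def by (rule length_L0)
  obtain T1 where T1: "tiling {1..n} (\<lambda>s. {1..F s}) T1"
    "\<forall>A\<in>T1. has_shape (\<lambda>i. F (L0 bs ! (i - 1))) {1..n} {1..n} A"
    using snoc.IH unfolding n_def by blast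
  have shape1: "has_shape G {1..n} {1..n} A" if "A \<in> T1" for A
    using T1(2)[rule_format, OF that]
    by (rule has_shape_reindex[OF _ bij_betw_id]) (auto simp: G_def L0_snoc nth_append lenL0)
  have "has_shape F {n+1..n+b} {n+1..n+b} (\<lambda>s. {1..F s})"
    unfolding has_shape_def by (intro exI[of _ id]) auto
  then obtain T2 where T2: "tiling {n+1..n+b} (\<lambda>s. {1..F s}) T2"
    "\<forall>A\<in>T2. has_shape F {1..b} {n+1..n+b} A"
    using tiling_shape_shift[OF F_add] by blast
  have shift: "bij_betw ((+) n) {1..b} {n+1..n+b}" by simp
  have shape2: "has_shape G {n+1..n+b} {n+1..n+b} A" if "A \<in> T2" for A
    using T2(2)[rule_format, OF that]
    by (rule has_shape_reindex[OF _ shift])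
      (auto simp: G_def L0_snoc nth_append lenL0 del: upt_Suc intro!: arg_cong[where f = F])
  have disj: "{1..n} \<inter> {n+1..n+b} = {}" by auto
  have un: "{1..n} \<union> {n+1..n+b} = {1..sum_list (bs @ [b])}" unfolding n_def by auto
  define T where "T = {override_on A2 A1 {1..n} | A1 A2. A1 \<in> T1 \<and> A2 \<in> T2}"
  have "tiling {1..sum_list (bs @ [b])} (\<lambda>s. {1..F s}) T"
    using tiling_prod[OF T1(1) T2(1) disj] unfolding T_def un .
  moreover have "has_shape G {1..sum_list (bs @ [b])} {1..sum_list (bs @ [b])} A" if "A \<in> T" for A
  proof -
    obtain A1 A2 where "A = override_on A2 A1 {1..n}" "A1 \<in> T1" "A2 \<in> T2"
      using \<open>A \<in> T\<close> unfolding T_def by blast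
    then show ?thesis using has_shape_union[OF shape1 shape2 disj disj] unfolding un by simp
  qed
  ultimately show ?case unfolding G_def by blast
qed

subsection \<open>From tilings to partitions into multi-blocks\<close>

lemma prod_sets_iff:
  "xs \<in> prod_sets n A \<longleftrightarrow> length xs = n \<and> (\<forall>s\<in>{1..n}. xs ! (s - 1) \<in> A s)"
  unfolding prod_sets_def image_Suc_lessThan[symmetric] by (simp add: lessThan_def)

lemma tiling_prod_sets:
  assumes T: "tiling {1..n} R T"
  shows "pairwise disjnt (prod_sets n ` T) \<and> \<Union>(prod_sets n ` T) = prod_sets n R"
proof (intro conjI pairwise_imageI subset_antisym subsetI)
  fix A1 A2 assume A: "A1 \<in> T" "A2 \<in> T" "prod_sets n A1 \<noteq> prod_sets n A2"
  show "disjnt (prod_sets n A1) (prod_sets n A2)"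
  proof (rule ccontr)
    assume "\<not> disjnt (prod_sets n A1) (prod_sets n A2)"
    then obtain xs where "xs \<in> prod_sets n A1" "xs \<in> prod_sets n A2" unfolding disjnt_def by auto
    then have "A1 = A2"
      by (intro tiling_unique[OF T A(1,2), of "\<lambda>s. xs ! (s - 1)"]) (simp_all add: prod_sets_iff)
    with A(3) show False by simp
  qed
next
  fix xs assume "xs \<in> \<Union>(prod_sets n ` T)"
  then obtain A where "A \<in> T" "xs \<in> prod_sets n A" by blast
  then show "xs \<in> prod_sets n R"
    using tiling_subset[OF T] by (fastforce simp: prod_sets_iff)
next
  fix xs assume "xs \<in> prod_sets n R"
  then obtain A where "A \<in> T" "\<forall>s\<in>{1..n}. xs ! (s - 1) \<in> A s"
    using tiling_cover[OF T, of "\<lambda>s. xs ! (s - 1)"] by (auto simp: prod_sets_iff)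
  with \<open>xs \<in> prod_sets n R\<close> show "xs \<in> \<Union>(prod_sets n ` T)" by (auto simp: prod_sets_iff)
qed

lemma is_multiblock_prod_sets:
  assumes "\<forall>s\<in>{1..sum_list bs}. A s \<subseteq> {1..F s}"
    and "has_shape (\<lambda>i. F (L0 bs ! (i - 1))) {1..sum_list bs} {1..sum_list bs} A"
  shows "\<exists>\<sigma>. is_multiblock F bs \<sigma> (prod_sets (sum_list bs) A)"
proof -
  obtain \<tau> where \<tau>: "bij_betw \<tau> {1..sum_list bs} {1..sum_list bs}"
    "\<forall>s\<in>{1..sum_list bs}. card (A s) = F (L0 bs ! (\<tau> s - 1))"
    using assms(2) unfolding has_shape_def by blast
  then have "is_multiblock F bs (restrict_id \<tau> {1..sum_list bs}) (prod_sets (sum_list bs) A)"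
    using assms(1) permutes_restrict_id[OF \<tau>(1)] unfolding is_multiblock_def Let_def by auto
  then show ?thesis by blast
qed

theorem theorem2:
  fixes F :: "nat \<Rightarrow> nat" and n :: nat and bs :: "nat list"
  assumes "in_T_lambda F"
    and "n \<ge> 1"
    and "\<forall>b\<in>set bs. b \<ge> 1"
    and "sum_list bs = n"
  shows "\<exists>P :: nat list set set.
           (\<forall>B\<in>P. \<exists>\<sigma>. is_multiblock F bs \<sigma> B) \<and>
           pairwise disjnt P \<and>
           \<Union>P = F_box F n"
proof -
  obtain lK lM :: "nat \<Rightarrow> nat \<Rightarrow> nat"
    where F_add: "\<forall>k\<ge>1. \<forall>m\<ge>1. F (k + m) = lK k m * F k + lM k m * F m"
    using assms(1) unfolding in_T_lambda_def by blast
  obtain T where T: "tiling {1..n} (\<lambda>s. {1..F s}) T"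
    "\<forall>A\<in>T. has_shape (\<lambda>i. F (L0 bs ! (i - 1))) {1..n} {1..n} A"
    using tiling_L0_shape[OF F_add, of bs] unfolding assms(4) by blast
  have "\<exists>\<sigma>. is_multiblock F bs \<sigma> (prod_sets n A)" if "A \<in> T" for A
    using is_multiblock_prod_sets[of bs A F] T(2) tiling_subset[OF T(1) that] that
    unfolding assms(4) by blast
  then show ?thesis
    using tiling_prod_sets[OF T(1)] unfolding F_box_def by (intro exI[of _ "prod_sets n ` T"]) auto
qed

end
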